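(* Let $\Gamma$ be a discrete subgroup of $E(n)$, and let $A=\lambda A'$, where $A'\in O(n)$ and $\lambda>0$. Suppose that $A\Gamma A^{-1}\subset\Gamma$. Then $A\Gamma A^{-1}$ is a subgroup of finite index in $\Gamma$.
   Context: $E(n)$ denotes the group of isometries of $\mathbb{R}^n$ (maps $x\mapsto Bx+b$, $B\in O(n)$, $b\in\mathbb{R}^n$) with the topology of $O(n)\times\mathbb{R}^n$; discreteness refers to this topology. $A\Gamma A^{-1}=\{A\circ\gamma\circ A^{-1}:\gamma\in\Gamma\}$. *)

theory Defs
  imports "HOL-Analysis.Analysis" "HOL-Algebra.Coset"
begin

definition isom :: "real^'n^'n \<Rightarrow> real^'n \<Rightarrow> (real^'n \<Rightarrow> real^'n)" where
  "isom B b = (\<lambda>x. B *v x + b)"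

definition Eucl_group :: "(real^'n \<Rightarrow> real^'n) monoid" where
  "Eucl_group = \<lparr>carrier = {isom B b | B b. orthogonal_matrix B},
                  mult = (\<lambda>f g. f \<circ> g), one = id\<rparr>"

text \<open>Discreteness of a subset of E(n), using the topology of O(n) x R^n
  (the parametrisation (B,b) \<mapsto> isom B b is injective).\<close>
definition discrete_isom_set :: "(real^'n \<Rightarrow> real^'n) set \<Rightarrow> bool" where
  "discrete_isom_set \<Gamma> =
     discrete {(B, b). orthogonal_matrix B \<and> isom B b \<in> \<Gamma>}"

definition conj_set :: "('a \<Rightarrow> 'a) \<Rightarrow> ('a \<Rightarrow> 'a) set \<Rightarrow> ('a \<Rightarrow> 'a) set" where
  "conj_set A \<Gamma> = {A \<circ> \<gamma> \<circ> inv_into UNIV A | \<gamma>. \<gamma> \<in> \<Gamma>}"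

end

theory Submission
  imports Defs
begin

text \<open>
  A discrete subgroup \<open>\<Gamma>\<close> of \<open>E(n)\<close> is uniformly discrete, because the metric on
  \<open>O(n) \<times> \<real>\<^sup>n\<close> is left invariant; a grid-packing argument then shows that the number
  \<open>N(r)\<close> of elements \<open>g \<in> \<Gamma>\<close> with \<open>|g 0| \<le> r\<close> grows at most polynomially in \<open>r\<close>.
  Conjugation by \<open>A\<close> maps the elements counted by \<open>N(r)\<close> into \<open>H = A\<Gamma>A\<^sup>-\<^sup>1\<close>, moving the
  origin by at most \<open>\<lambda>r\<close>. Multiplying them on the right by representatives of \<open>m\<close>
  distinct cosets of \<open>H\<close> gives \<open>m N(r)\<close> distinct elements counted by \<open>N(\<lambda>r + c)\<close>.
  Iterating, \<open>N\<close> would grow like \<open>m\<^sup>j\<close> along radii that grow like \<open>\<lambda>\<^sup>j\<close>, which for large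
  \<open>m\<close> contradicts the polynomial bound; hence the index of \<open>H\<close> is bounded.
\<close>

declare transpose_matrix_vector [simp del]

lemma norm_orthogonal_matrix_vector_mult:
  fixes B :: "real^'n^'n"
  assumes "orthogonal_matrix B"
  shows "norm (B *v x) = norm x"
proof -
  have "orthogonal_transformation (\<lambda>x. B *v x)"
    using assms by (simp add: orthogonal_transformation_matrix)
  thus ?thesis by (simp add: orthogonal_transformation_norm)
qed

lemma norm_orthogonal_matrix:
  fixes B :: "real^'n^'n"
  assumes "orthogonal_matrix B"
  shows "norm B = sqrt (real CARD('n))"
proof -
  have "norm (B $ i) = 1" for i
    using assms orthogonal_matrix_orthonormal_rows[of B] by (simp add: row_def)
  thus ?thesis by (simp add: norm_vec_def L2_set_def)
qed

lemma norm_matrix_transpose: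
  fixes M :: "real^'n^'m"
  shows "norm (transpose M) = norm M"
proof -
  have "norm (transpose M) ^ 2 = norm M ^ 2"
    by (simp add: power2_norm_eq_inner inner_vec_def transpose_def sum.swap[of _ "UNIV::'n set"])
  thus ?thesis by (simp add: power2_eq_iff_nonneg)
qed

lemma row_matrix_matrix_mult:
  fixes M :: "'a::comm_semiring_1^'n^'m"
  shows "(M ** B) $ i = transpose B *v (M $ i)"
  by (simp add: vec_eq_iff matrix_matrix_mult_def matrix_vector_mult_def transpose_def mult.commute)

lemma norm_matrix_mult_orthogonal_right:
  fixes M :: "real^'n^'m" and B :: "real^'n^'n"
  assumes "orthogonal_matrix B"
  shows "norm (M ** B) = norm M"
proof -
  have rows: "norm ((M ** B) $ i) = norm (M $ i)" for i
    using assms by (simp add: row_matrix_matrix_mult norm_orthogonal_matrix_vector_mult)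
  show ?thesis unfolding norm_vec_def[of "M ** B"] norm_vec_def[of M] rows ..
qed

lemma norm_matrix_mult_orthogonal_left:
  fixes B :: "real^'n^'n" and M :: "real^'m^'n"
  assumes "orthogonal_matrix B"
  shows "norm (B ** M) = norm M"
  by (metis assms matrix_transpose_mul norm_matrix_transpose norm_matrix_mult_orthogonal_right
      orthogonal_matrix_transpose)

text \<open>\<open>(B\<^sup>T C, B\<^sup>T (c - b))\<close> are the parameters of \<open>(isom B b)\<^sup>-\<^sup>1 \<circ> isom C c\<close>.\<close>

lemma dist_isom_params_left_invariant:
  fixes B C :: "real^'n^'n"
  assumes "orthogonal_matrix B"
  shows "dist (mat 1, 0) (transpose B ** C, transpose B *v (c - b)) = dist (B, b) (C, c)"
proof -
  have "mat 1 - transpose B ** C = transpose B ** (B - C)"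
    using assms by (simp add: orthogonal_matrix_def vec_eq_iff matrix_matrix_mult_def
        sum_subtractf right_diff_distrib)
  hence "dist (mat 1) (transpose B ** C) = dist B C"
    using assms by (simp add: dist_norm norm_matrix_mult_orthogonal_left)
  moreover have "dist 0 (transpose B *v (c - b)) = dist b c"
    using assms by (simp add: dist_norm norm_orthogonal_matrix_vector_mult norm_minus_commute)
  ultimately show ?thesis by (simp add: dist_Pair_Pair)
qed

lemma isom_comp: "isom B b \<circ> isom C c = isom (B ** C) (B *v c + b)"
  by (auto simp: isom_def fun_eq_iff matrix_vector_mul_assoc matrix_vector_right_distrib)

lemma isom_apply_0 [simp]: "isom B b 0 = b"
  by (simp add: isom_def)

lemma isom_id: "isom (mat 1) 0 = id"
  by (simp add: isom_def fun_eq_iff)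

lemma carrier_Eucl_group: "carrier Eucl_group = {isom B b | B b. orthogonal_matrix B}"
  by (simp add: Eucl_group_def)

lemma Eucl_group_simps [simp]: "mult Eucl_group = (\<lambda>f g. f \<circ> g)" "one Eucl_group = id"
  by (simp_all add: Eucl_group_def)

lemma Eucl_groupE:
  assumes "g \<in> carrier Eucl_group"
  obtains B b where "orthogonal_matrix B" "g = isom B b"
  using assms by (auto simp: carrier_Eucl_group)

lemma isom_inverse_comp:
  assumes "orthogonal_matrix B"
  shows "isom (transpose B) (- (transpose B *v b)) \<circ> isom B b = id"
  using assms unfolding isom_comp orthogonal_matrix_def
  by (simp add: isom_id[symmetric])

lemma group_Eucl_group: "group (Eucl_group :: (real^'n \<Rightarrow> real^'n) monoid)"
proof (rule groupI)
  fix x y :: "real^'n \<Rightarrow> real^'n"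
  assume "x \<in> carrier Eucl_group" "y \<in> carrier Eucl_group"
  then obtain B b C c where "orthogonal_matrix B" "orthogonal_matrix C" "x = isom B b" "y = isom C c"
    by (metis Eucl_groupE)
  then show "x \<otimes>\<^bsub>Eucl_group\<^esub> y \<in> carrier Eucl_group"
    by (auto simp: carrier_Eucl_group isom_comp intro: orthogonal_matrix_mul)
next
  show "\<one>\<^bsub>Eucl_group\<^esub> \<in> carrier (Eucl_group :: (real^'n \<Rightarrow> real^'n) monoid)"
    by (simp add: carrier_Eucl_group) (metis isom_id orthogonal_matrix_id)
next
  fix x :: "real^'n \<Rightarrow> real^'n"
  assume "x \<in> carrier Eucl_group"
  then obtain B b where B: "orthogonal_matrix B" "x = isom B b"
    by (rule Eucl_groupE)
  have "isom (transpose B) (- (transpose B *v b)) \<in> carrier Eucl_group"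
    using B by (auto simp: carrier_Eucl_group)
  thus "\<exists>y\<in>carrier Eucl_group. y \<otimes>\<^bsub>Eucl_group\<^esub> x = \<one>\<^bsub>Eucl_group\<^esub>"
    using isom_inverse_comp[OF B(1)] B by force
qed (simp_all add: comp_assoc)

lemma inv_Eucl_group_isom:
  assumes "orthogonal_matrix B"
  shows "inv\<^bsub>Eucl_group\<^esub> (isom B b) = isom (transpose B) (- (transpose B *v b))"
  by (rule group.inv_equality[OF group_Eucl_group])
    (use assms isom_inverse_comp in \<open>auto simp: carrier_Eucl_group\<close>)

lemma norm_apply_le_Eucl_group:
  assumes "g \<in> carrier Eucl_group"
  shows "norm (g x) \<le> norm x + norm (g 0)"
proof -
  obtain B b where "orthogonal_matrix B" "g = isom B b"
    using assms by (rule Eucl_groupE)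
  thus ?thesis
    using norm_triangle_ineq[of "B *v x" b] by (simp add: isom_def norm_orthogonal_matrix_vector_mult)
qed

section \<open>Polynomial growth of discrete subgroups\<close>

definition isom_params :: "(real^'n \<Rightarrow> real^'n) set \<Rightarrow> ((real^'n^'n) \<times> (real^'n)) set" where
  "isom_params \<Gamma> = {(B, b). orthogonal_matrix B \<and> isom B b \<in> \<Gamma>}"

lemma discrete_subgroup_uniformly_discrete:
  fixes \<Gamma> :: "(real^'n \<Rightarrow> real^'n) set"
  assumes sg: "subgroup \<Gamma> Eucl_group" and "discrete_isom_set \<Gamma>"
  obtains e where "e > 0"
    "\<And>p q. p \<in> isom_params \<Gamma> \<Longrightarrow> q \<in> isom_params \<Gamma> \<Longrightarrow> dist p q < e \<Longrightarrow> p = q"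
proof -
  have "isom (mat 1) 0 \<in> \<Gamma>"
    using subgroup.one_closed[OF sg] by (simp add: isom_id)
  hence "(mat 1, 0) \<in> isom_params \<Gamma>"
    by (simp add: isom_params_def orthogonal_matrix_id)
  moreover have "discrete (isom_params \<Gamma>)"
    using assms(2) by (simp add: discrete_isom_set_def isom_params_def)
  ultimately obtain e where e: "e > 0"
    and isolated: "\<And>p. p \<in> isom_params \<Gamma> \<Longrightarrow> dist (mat 1, 0) p < e \<Longrightarrow> p = (mat 1, 0)"
    by (metis discreteD isolated_inE_dist)
  show ?thesis
  proof (rule that[OF e])
    fix p q assume "p \<in> isom_params \<Gamma>" "q \<in> isom_params \<Gamma>" and pq: "dist p q < e"
    then obtain B b C c where p: "p = (B, b)" and q: "q = (C, c)"
      and B: "orthogonal_matrix B" and C: "orthogonal_matrix C"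
      and gB: "isom B b \<in> \<Gamma>" and gC: "isom C c \<in> \<Gamma>"
      by (auto simp: isom_params_def)
    have "inv\<^bsub>Eucl_group\<^esub> (isom B b) \<otimes>\<^bsub>Eucl_group\<^esub> isom C c \<in> \<Gamma>"
      using sg gB gC by (simp add: subgroup.m_closed subgroup.m_inv_closed del: Eucl_group_simps)
    hence "isom (transpose B ** C) (transpose B *v (c - b)) \<in> \<Gamma>"
      using B by (simp add: inv_Eucl_group_isom isom_comp matrix_vector_mult_diff_distrib)
    hence "(transpose B ** C, transpose B *v (c - b)) \<in> isom_params \<Gamma>"
      using B C by (simp add: isom_params_def orthogonal_matrix_mul)
    with isolated have "transpose B ** C = mat 1" "transpose B *v (c - b) = 0"
      using pq p q dist_isom_params_left_invariant[OF B] by auto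
    moreover have "C = B ** (transpose B ** C)"
      using B by (simp add: matrix_mul_assoc orthogonal_matrix_def)
    ultimately show "p = q"
      using p q B norm_orthogonal_matrix_vector_mult[of "transpose B" "c - b"] by simp
  qed
qed

lemma floor_divide_eq_imp_abs_diff_less:
  fixes x y \<delta> :: real
  assumes "\<delta> > 0" "\<lfloor>x / \<delta>\<rfloor> = \<lfloor>y / \<delta>\<rfloor>"
  shows "\<bar>x - y\<bar> < \<delta>"
proof -
  have "\<bar>x / \<delta> - y / \<delta>\<bar> < 1"
    using assms(2) floor_correct[of "x / \<delta>"] floor_correct[of "y / \<delta>"] by linarith
  thus ?thesis using assms(1) by (simp add: diff_divide_distrib[symmetric])
qed

lemma floor_divide_bounds:
  fixes x R \<delta> :: real
  assumes "\<delta> > 0" "\<bar>x\<bar> \<le> R"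
  shows "- \<lceil>R / \<delta>\<rceil> \<le> \<lfloor>x / \<delta>\<rfloor> \<and> \<lfloor>x / \<delta>\<rfloor> \<le> \<lceil>R / \<delta>\<rceil>"
proof -
  have "x / \<delta> \<le> R / \<delta>" "- (R / \<delta>) \<le> x / \<delta>"
    using assms by (auto simp: field_simps)
  hence "\<lfloor>x / \<delta>\<rfloor> \<le> \<lfloor>R / \<delta>\<rfloor>" "\<lfloor>- (R / \<delta>)\<rfloor> \<le> \<lfloor>x / \<delta>\<rfloor>"
    by (auto intro: floor_mono)
  thus ?thesis
    using floor_le_ceiling[of "R / \<delta>"] unfolding floor_minus by linarith
qed

text \<open>A grid of mesh \<open>e / DIM('a)\<close> separates the points of a uniformly \<open>e\<close>-discrete set.\<close>

lemma card_uniformly_discrete_inter_cball: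
  fixes P :: "'a::euclidean_space set" and e R :: real
  assumes e: "e > 0" and sep: "\<And>x y. x \<in> P \<Longrightarrow> y \<in> P \<Longrightarrow> dist x y < e \<Longrightarrow> x = y"
    and R: "0 \<le> R"
  shows "finite (P \<inter> cball 0 R) \<and> card (P \<inter> cball 0 R) \<le> (2 * DIM('a) * R / e + 3) ^ DIM('a)"
proof -
  define \<delta> where "\<delta> = e / DIM('a)"
  have \<delta>: "\<delta> > 0" unfolding \<delta>_def using e by simp
  define k where "k = \<lceil>R / \<delta>\<rceil>"
  define grid where "grid x = (\<lambda>b\<in>Basis. \<lfloor>inner x b / \<delta>\<rfloor>)" for x :: 'a
  have inj: "inj_on grid P"
  proof (rule inj_onI)
    fix x y assume x: "x \<in> P" and y: "y \<in> P" and "grid x = grid y"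
    hence "\<bar>inner (x - y) b\<bar> < \<delta>" if "b \<in> Basis" for b
      using floor_divide_eq_imp_abs_diff_less[OF \<delta>] that
      by (metis grid_def inner_diff_left restrict_apply')
    hence "(\<Sum>b\<in>Basis. \<bar>inner (x - y) b\<bar>) < (\<Sum>b\<in>(Basis::'a set). \<delta>)"
      by (intro sum_strict_mono) auto
    hence "dist x y < e"
      using norm_le_l1[of "x - y"] e by (simp add: dist_norm \<delta>_def)
    thus "x = y" using sep x y by blast
  qed
  have range: "grid ` (P \<inter> cball 0 R) \<subseteq> Pi\<^sub>E Basis (\<lambda>_. {-k..k})"
  proof (clarsimp simp: grid_def)
    fix x b :: 'a assume "norm x \<le> R" "b \<in> Basis"
    hence "\<bar>inner x b\<bar> \<le> R" using Basis_le_norm[of b x] by linarith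
    thus "- k \<le> \<lfloor>inner x b / \<delta>\<rfloor> \<and> \<lfloor>inner x b / \<delta>\<rfloor> \<le> k"
      unfolding k_def by (rule floor_divide_bounds[OF \<delta>])
  qed
  have inj_cball: "inj_on grid (P \<inter> cball 0 R)"
    using inj by (rule inj_on_subset) auto
  have fin_grid: "finite (Pi\<^sub>E (Basis::'a set) (\<lambda>_. {-k..k}))"
    by (simp add: finite_PiE)
  have "0 \<le> R / \<delta>" using R \<delta> by simp
  hence "0 \<le> k" unfolding k_def by simp
  hence "real (card {-k..k}) = 2 * k + 1" by simp
  also have "\<dots> \<le> 2 * DIM('a) * R / e + 3"
    using ceiling_correct[of "R / \<delta>"] e unfolding k_def \<delta>_def by (simp add: field_simps)
  finally have bound: "real (card {-k..k}) ^ DIM('a) \<le> (2 * DIM('a) * R / e + 3) ^ DIM('a)"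
    by (intro power_mono) auto
  have "card (P \<inter> cball 0 R) \<le> card {-k..k} ^ DIM('a)"
    using card_inj_on_le[OF inj_cball range fin_grid] by (simp add: card_PiE)
  hence "real (card (P \<inter> cball 0 R)) \<le> real (card {-k..k}) ^ DIM('a)"
    by (metis of_nat_le_iff of_nat_power)
  with bound have "real (card (P \<inter> cball 0 R)) \<le> (2 * DIM('a) * R / e + 3) ^ DIM('a)"
    by linarith
  thus ?thesis using inj_on_finite[OF inj_cball range fin_grid] by blast
qed

definition orbit_cball :: "(real^'n \<Rightarrow> real^'n) set \<Rightarrow> real \<Rightarrow> (real^'n \<Rightarrow> real^'n) set" where
  "orbit_cball \<Gamma> r = {g \<in> \<Gamma>. norm (g 0) \<le> r}"

lemma orbit_cball_subset_isom_params:
  fixes \<Gamma> :: "(real^'n \<Rightarrow> real^'n) set"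
  assumes "\<Gamma> \<subseteq> carrier Eucl_group"
  shows "orbit_cball \<Gamma> r
    \<subseteq> (\<lambda>(B, b). isom B b) ` (isom_params \<Gamma> \<inter> cball 0 (sqrt (real CARD('n)) + r))"
proof
  fix g assume g: "g \<in> orbit_cball \<Gamma> r"
  then obtain B b where B: "orthogonal_matrix B" and gB: "g = isom B b"
    using assms Eucl_groupE unfolding orbit_cball_def by blast
  have "norm (B, b) \<le> sqrt (real CARD('n)) + r"
    using norm_Pair_le[of B b] g gB norm_orthogonal_matrix[OF B] unfolding orbit_cball_def by simp
  thus "g \<in> (\<lambda>(B, b). isom B b) ` (isom_params \<Gamma> \<inter> cball 0 (sqrt (real CARD('n)) + r))"
    using g gB B unfolding orbit_cball_def isom_params_def by force
qed

lemma orbit_cball_polynomial_growth: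
  fixes \<Gamma> :: "(real^'n \<Rightarrow> real^'n) set"
  assumes sg: "subgroup \<Gamma> Eucl_group" and disc: "discrete_isom_set \<Gamma>"
  obtains K where "0 \<le> K" "\<And>r. 0 \<le> r \<Longrightarrow>
    finite (orbit_cball \<Gamma> r) \<and> real (card (orbit_cball \<Gamma> r)) \<le> (K * (r + 1)) ^ DIM((real^'n^'n) \<times> (real^'n))"
proof -
  obtain e where e: "e > 0"
    and sep: "\<And>p q. p \<in> isom_params \<Gamma> \<Longrightarrow> q \<in> isom_params \<Gamma> \<Longrightarrow> dist p q < e \<Longrightarrow> p = q"
    using discrete_subgroup_uniformly_discrete[OF sg disc] by blast
  let ?d = "DIM((real^'n^'n) \<times> (real^'n))"
  define s where "s = sqrt (real CARD('n))"
  define K where "K = 2 * ?d * (s + 1) / e + 3"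
  have "0 \<le> s" unfolding s_def by simp
  hence K: "0 \<le> K" unfolding K_def using e by simp
  show ?thesis
  proof (rule that[OF K])
    fix r :: real assume r: "0 \<le> r"
    define T where "T = isom_params \<Gamma> \<inter> cball 0 (s + r)"
    have sub: "orbit_cball \<Gamma> r \<subseteq> (\<lambda>(B, b). isom B b) ` T"
      using orbit_cball_subset_isom_params[OF subgroup.subset[OF sg]] unfolding T_def s_def .
    have "0 \<le> s + r" using r \<open>0 \<le> s\<close> by simp
    from card_uniformly_discrete_inter_cball[where P = "isom_params \<Gamma>", OF e sep this,
        folded T_def]
    have finT: "finite T" and cardT: "real (card T) \<le> (2 * ?d * (s + r) / e + 3) ^ ?d"
      by auto
    have "2 * ?d * (s + r) / e + 3 \<le> K * (r + 1)"
      using r e \<open>0 \<le> s\<close> unfolding K_def by (simp add: field_simps mult_left_mono)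
    hence "(2 * ?d * (s + r) / e + 3) ^ ?d \<le> (K * (r + 1)) ^ ?d"
      using e r \<open>0 \<le> s\<close> by (intro power_mono) auto
    moreover have "card (orbit_cball \<Gamma> r) \<le> card T"
      using card_mono[OF finite_imageI[OF finT] sub] card_image_le[OF finT, of "\<lambda>(B, b). isom B b"]
      by linarith
    hence "real (card (orbit_cball \<Gamma> r)) \<le> real (card T)"
      by simp
    ultimately show "finite (orbit_cball \<Gamma> r) \<and> real (card (orbit_cball \<Gamma> r)) \<le> (K * (r + 1)) ^ ?d"
      using finite_subset[OF sub finite_imageI[OF finT]] cardT by linarith
  qed
qed

section \<open>Growth along affinely growing radii\<close>

lemma funpow_affine_nonneg:
  fixes lam c :: real
  assumes "0 \<le> lam" "0 \<le> c"
  shows "0 \<le> ((\<lambda>r. lam * r + c) ^^ j) 0"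
  by (induction j) (simp_all add: assms)

lemma funpow_affine_le:
  fixes lam c :: real
  assumes lam: "0 \<le> lam" and c: "0 \<le> c"
  shows "((\<lambda>r. lam * r + c) ^^ j) 0 + 1 \<le> (c + 1) * (2 * max 1 lam) ^ j"
proof (induction j)
  case 0
  show ?case using c by simp
next
  case (Suc j)
  define \<mu> where "\<mu> = max 1 lam"
  define x where "x = ((\<lambda>r. lam * r + c) ^^ j) 0"
  have \<mu>: "1 \<le> \<mu>" "lam \<le> \<mu>" by (simp_all add: \<mu>_def)
  have "1 \<le> (2 * \<mu>) ^ j" using \<mu> by (intro one_le_power) simp
  hence "1 \<le> \<mu> * (2 * \<mu>) ^ j" using \<mu> mult_mono[of 1 \<mu> 1 "(2 * \<mu>) ^ j"] by simp
  hence "(c + 1) * 1 \<le> (c + 1) * (\<mu> * (2 * \<mu>) ^ j)"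
    using c by (intro mult_left_mono) auto
  hence "c + 1 \<le> \<mu> * ((c + 1) * (2 * \<mu>) ^ j)"
    by (simp add: ac_simps)
  moreover have "lam * x \<le> \<mu> * x"
    using \<mu> funpow_affine_nonneg[OF lam c, of j] unfolding x_def by (intro mult_right_mono) auto
  moreover have "\<mu> * (x + 1) \<le> \<mu> * ((c + 1) * (2 * \<mu>) ^ j)"
    using Suc.IH unfolding x_def \<mu>_def by (intro mult_left_mono) auto
  moreover have "(c + 1) * (2 * \<mu>) ^ Suc j = 2 * (\<mu> * ((c + 1) * (2 * \<mu>) ^ j))"
    by (simp add: ac_simps)
  ultimately have "lam * x + c + 1 \<le> (c + 1) * (2 * \<mu>) ^ Suc j"
    using \<mu> unfolding distrib_left mult_1_right by linarith
  thus ?case unfolding x_def \<mu>_def by simp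
qed

lemma polynomial_growth_bounds_multiplier:
  fixes N :: "real \<Rightarrow> real" and K lam c m :: real
  assumes K: "0 \<le> K" and poly: "\<And>r. 0 \<le> r \<Longrightarrow> N r \<le> (K * (r + 1)) ^ d"
    and N0: "1 \<le> N 0" and lam: "0 \<le> lam" and c: "0 \<le> c"
    and mult: "\<And>r. 0 \<le> r \<Longrightarrow> m * N r \<le> N (lam * r + c)"
  shows "m < 2 * (2 * max 1 lam) ^ d"
proof (rule ccontr)
  define Q where "Q = (2 * max 1 lam) ^ d"
  assume "\<not> m < 2 * (2 * max 1 lam) ^ d"
  hence m: "2 * Q \<le> m" by (simp add: Q_def)
  have Q: "1 \<le> Q" unfolding Q_def by (intro one_le_power) simp
  define radius where "radius j = ((\<lambda>r. lam * r + c) ^^ j) 0" for j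
  have radius_Suc: "radius (Suc j) = lam * radius j + c" for j
    by (simp add: radius_def)
  have radius_nonneg: "0 \<le> radius j" for j
    unfolding radius_def using lam c by (rule funpow_affine_nonneg)
  have lower: "m ^ j \<le> N (radius j)" for j
  proof (induction j)
    case 0
    show ?case using N0 by (simp add: radius_def)
  next
    case (Suc j)
    have "m ^ Suc j \<le> m * N (radius j)"
      using Suc.IH m Q by (simp add: mult_left_mono)
    also have "\<dots> \<le> N (radius (Suc j))"
      using mult[OF radius_nonneg] by (simp add: radius_Suc)
    finally show ?case .
  qed
  define D where "D = (K * (c + 1)) ^ d"
  have upper: "N (radius j) \<le> D * Q ^ j" for j
  proof -
    have "N (radius j) \<le> (K * (radius j + 1)) ^ d"
      using poly[OF radius_nonneg] .
    also have "\<dots> \<le> (K * ((c + 1) * (2 * max 1 lam) ^ j)) ^ d"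
      using funpow_affine_le[OF lam c, of j] radius_nonneg[of j] K unfolding radius_def
      by (intro power_mono mult_left_mono) auto
    also have "\<dots> = D * Q ^ j"
      by (simp add: D_def Q_def power_mult_distrib mult.assoc power_mult[symmetric] mult.commute)
    finally show ?thesis .
  qed
  have powers_bounded: "2 ^ j \<le> D" for j
  proof -
    have "(2 * Q) ^ j \<le> m ^ j"
      using m Q by (intro power_mono) auto
    hence "2 ^ j * Q ^ j \<le> m ^ j"
      by (simp add: power_mult_distrib)
    with lower[of j] upper[of j] have "2 ^ j * Q ^ j \<le> D * Q ^ j" by linarith
    thus ?thesis using Q by simp
  qed
  have "real (nat \<lceil>D\<rceil>) < 2 ^ nat \<lceil>D\<rceil>"
    using less_exp[of "nat \<lceil>D\<rceil>"] by (metis of_nat_less_iff of_nat_numeral of_nat_power)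
  hence "D < 2 ^ nat \<lceil>D\<rceil>"
    using real_nat_ceiling_ge[of D] by linarith
  with powers_bounded show False by (simp add: not_le[symmetric])
qed

section \<open>Conjugation by a similarity\<close>

lemma bij_scaled_orthogonal:
  fixes A' :: "real^'n^'n"
  assumes "orthogonal_matrix A'" "lam \<noteq> 0"
  shows "bij (\<lambda>x. lam *\<^sub>R (A' *v x))"
  by (rule o_bij[where g = "\<lambda>y. (1 / lam) *\<^sub>R (transpose A' *v y)"])
    (use assms in \<open>simp_all add: fun_eq_iff matrix_vector_mult_scaleR matrix_vector_mul_assoc
        orthogonal_matrix_def\<close>)

lemma norm_conj_scaled_orthogonal_apply_0:
  fixes A' :: "real^'n^'n"
  assumes "orthogonal_matrix A'" "0 < lam" and A: "A = (\<lambda>x. lam *\<^sub>R (A' *v x))"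
  shows "norm ((A \<circ> \<gamma> \<circ> inv_into UNIV A) 0) = lam * norm (\<gamma> 0)"
proof -
  have "inv_into UNIV A 0 = 0"
    using bij_scaled_orthogonal[of A' lam] assms by (intro inv_f_eq) (auto dest: bij_is_inj)
  thus ?thesis
    using assms by (simp add: norm_orthogonal_matrix_vector_mult)
qed

lemma conj_set_subgroup:
  assumes sg: "subgroup \<Gamma> Eucl_group" and A: "bij A" and sub: "conj_set A \<Gamma> \<subseteq> \<Gamma>"
  shows "subgroup (conj_set A \<Gamma>) (Eucl_group\<lparr>carrier := \<Gamma>\<rparr>)"
proof -
  let ?G = "Eucl_group\<lparr>carrier := \<Gamma>\<rparr>"
  have grp: "group ?G"
    by (rule group.subgroup_imp_group[OF group_Eucl_group sg])
  have img: "conj_set A \<Gamma> = (\<lambda>\<gamma>. A \<circ> \<gamma> \<circ> inv_into UNIV A) ` carrier ?G"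
    by (auto simp: conj_set_def)
  have "A \<circ> (\<gamma> \<circ> \<delta>) \<circ> inv_into UNIV A
      = (A \<circ> \<gamma> \<circ> inv_into UNIV A) \<circ> (A \<circ> \<delta> \<circ> inv_into UNIV A)" for \<gamma> \<delta>
    using A by (simp add: fun_eq_iff bij_is_inj)
  hence "(\<lambda>\<gamma>. A \<circ> \<gamma> \<circ> inv_into UNIV A) \<in> hom ?G ?G"
    using sub img by (intro homI) auto
  hence "group_hom ?G ?G (\<lambda>\<gamma>. A \<circ> \<gamma> \<circ> inv_into UNIV A)"
    using grp by (simp add: group_hom_def group_hom_axioms_def)
  thus ?thesis
    using img group_hom.img_is_subgroup by metis
qed

lemma (in group) card_set_mult_right_transversal:
  assumes "subgroup H G" "H' \<subseteq> H" "S \<subseteq> carrier G" and inj: "inj_on (\<lambda>s. H #> s) S"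
  shows "card (H' <#> S) = card H' * card S"
proof -
  have HG: "H \<subseteq> carrier G" using assms(1) by (rule subgroup.subset)
  have "inj_on (\<lambda>(h, s). h \<otimes> s) (H' \<times> S)"
  proof (rule inj_onI, clarify)
    fix h s h' s' assume h: "h \<in> H'" "h' \<in> H'" and s: "s \<in> S" "s' \<in> S"
      and eq: "h \<otimes> s = h' \<otimes> s'"
    have hH: "h \<in> H" "h' \<in> H" and sG: "s \<in> carrier G" "s' \<in> carrier G"
      using h s assms(2,3) by auto
    have "H #> s = H #> (h \<otimes> s)"
      by (rule repr_independence[OF rcosI[OF hH(1) HG sG(1)] sG(1) assms(1)])
    also have "\<dots> = H #> s'"
      unfolding eq by (rule repr_independence[OF rcosI[OF hH(2) HG sG(2)] sG(2) assms(1), symmetric])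
    finally have ss: "s = s'"
      using inj_onD[OF inj _ s] by simp
    hence "h = h'"
      using eq hH HG sG by (simp add: right_cancel subsetD)
    thus "h = h' \<and> s = s'" using ss by simp
  qed
  moreover have "H' <#> S = (\<lambda>(h, s). h \<otimes> s) ` (H' \<times> S)"
    unfolding set_mult_def by force
  ultimately show ?thesis
    by (simp add: card_image card_cartesian_product)
qed

lemma finite_image_if_card_injective_subsets_bounded:
  assumes "\<And>S. S \<subseteq> A \<Longrightarrow> finite S \<Longrightarrow> inj_on f S \<Longrightarrow> card S \<le> C"
  shows "finite (f ` A)"
proof -
  have "card T \<le> C" if T: "T \<subseteq> f ` A" "finite T" for T
  proof -
    let ?S = "inv_into A f ` T"
    have "?S \<subseteq> A"
      using T(1) by (auto intro: inv_into_into)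
    moreover have "inj_on f ?S"
    proof (rule inj_onI)
      fix x y assume "x \<in> ?S" "y \<in> ?S" "f x = f y"
      then obtain a b where "a \<in> T" "b \<in> T" "x = inv_into A f a" "y = inv_into A f b" "f x = f y"
        by blast
      with T(1) show "x = y"
        by (metis f_inv_into_f subsetD)
    qed
    moreover have "card ?S = card T"
      using card_image[OF inj_on_inv_into[OF T(1)]] .
    ultimately show ?thesis
      using assms[of ?S] T(2) by simp
  qed
  thus ?thesis
    using finite_if_finite_subsets_card_bdd[of "f ` A" C] by blast
qed

lemma card_orbit_cball_mult_transversal:
  fixes \<Gamma> :: "(real^'n \<Rightarrow> real^'n) set" and A' :: "real^'n^'n"
  assumes sg: "subgroup \<Gamma> Eucl_group" and A': "orthogonal_matrix A'" and lam: "0 < lam"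
    and A: "A = (\<lambda>x. lam *\<^sub>R (A' *v x))" and sub: "conj_set A \<Gamma> \<subseteq> \<Gamma>"
    and S: "S \<subseteq> \<Gamma>" "inj_on (\<lambda>s. conj_set A \<Gamma> #>\<^bsub>Eucl_group\<lparr>carrier := \<Gamma>\<rparr>\<^esub> s) S"
    and c: "\<forall>s\<in>S. norm (s 0) \<le> c"
    and fin: "finite (orbit_cball \<Gamma> (lam * r + c))"
  shows "card S * card (orbit_cball \<Gamma> r) \<le> card (orbit_cball \<Gamma> (lam * r + c))"
proof -
  let ?G = "Eucl_group\<lparr>carrier := \<Gamma>\<rparr>"
  define cj where "cj \<gamma> = A \<circ> \<gamma> \<circ> inv_into UNIV A" for \<gamma> :: "real^'n \<Rightarrow> real^'n"
  define H' where "H' = cj ` orbit_cball \<Gamma> r"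
  have bijA: "bij A"
    using bij_scaled_orthogonal[OF A'] lam A by simp
  have H'_sub: "H' \<subseteq> conj_set A \<Gamma>"
    unfolding H'_def cj_def conj_set_def orbit_cball_def by auto
  have "inj cj"
  proof (rule injI)
    fix \<gamma> \<delta> assume "cj \<gamma> = cj \<delta>"
    hence "inv_into UNIV A \<circ> cj \<gamma> \<circ> A = inv_into UNIV A \<circ> cj \<delta> \<circ> A" by simp
    thus "\<gamma> = \<delta>"
      using bijA by (simp add: cj_def fun_eq_iff bij_is_inj)
  qed
  hence card_H': "card H' = card (orbit_cball \<Gamma> r)"
    unfolding H'_def by (simp add: card_image inj_on_subset)
  have "H' <#>\<^bsub>?G\<^esub> S \<subseteq> orbit_cball \<Gamma> (lam * r + c)"
  proof
    fix g assume "g \<in> H' <#>\<^bsub>?G\<^esub> S"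
    then obtain \<gamma> s where \<gamma>: "\<gamma> \<in> orbit_cball \<Gamma> r" and s: "s \<in> S" and g: "g = cj \<gamma> \<circ> s"
      by (auto simp: set_mult_def H'_def)
    have "cj \<gamma> \<in> \<Gamma>"
      using H'_sub sub \<gamma> unfolding H'_def by auto
    hence "g \<in> \<Gamma>"
      using g s S(1) subgroup.m_closed[OF sg, of "cj \<gamma>" s] by auto
    have "norm (g 0) \<le> norm (s 0) + norm (cj \<gamma> 0)"
      using norm_apply_le_Eucl_group \<open>cj \<gamma> \<in> \<Gamma>\<close> subgroup.subset[OF sg] g by auto
    also have "\<dots> \<le> c + lam * r"
      using c s norm_conj_scaled_orthogonal_apply_0[OF A' lam A, of \<gamma>] \<gamma> lam
      unfolding orbit_cball_def cj_def by (simp add: add_mono)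
    finally show "g \<in> orbit_cball \<Gamma> (lam * r + c)"
      using \<open>g \<in> \<Gamma>\<close> unfolding orbit_cball_def by simp
  qed
  hence "card (H' <#>\<^bsub>?G\<^esub> S) \<le> card (orbit_cball \<Gamma> (lam * r + c))"
    using fin by (rule card_mono[rotated])
  moreover have "card (H' <#>\<^bsub>?G\<^esub> S) = card H' * card S"
    using group.card_set_mult_right_transversal[OF group.subgroup_imp_group[OF group_Eucl_group sg]
        conj_set_subgroup[OF sg bijA sub] H'_sub] S by simp
  ultimately show ?thesis
    using card_H' by (simp add: mult.commute)
qed

lemma card_transversal_conj_set_bound:
  fixes \<Gamma> :: "(real^'n \<Rightarrow> real^'n) set" and A' :: "real^'n^'n"
  assumes sg: "subgroup \<Gamma> Eucl_group" and disc: "discrete_isom_set \<Gamma>"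
    and A': "orthogonal_matrix A'" and lam: "0 < lam"
    and A: "A = (\<lambda>x. lam *\<^sub>R (A' *v x))" and sub: "conj_set A \<Gamma> \<subseteq> \<Gamma>"
    and S: "S \<subseteq> \<Gamma>" "finite S" "inj_on (\<lambda>s. conj_set A \<Gamma> #>\<^bsub>Eucl_group\<lparr>carrier := \<Gamma>\<rparr>\<^esub> s) S"
  shows "real (card S) < 2 * (2 * max 1 lam) ^ DIM((real^'n^'n) \<times> (real^'n))"
proof -
  obtain K where K: "0 \<le> K" and poly: "\<And>r. 0 \<le> r \<Longrightarrow>
    finite (orbit_cball \<Gamma> r) \<and> real (card (orbit_cball \<Gamma> r)) \<le> (K * (r + 1)) ^ DIM((real^'n^'n) \<times> (real^'n))"
    using orbit_cball_polynomial_growth[OF sg disc] by blast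
  define c where "c = (\<Sum>s\<in>S. norm (s 0))"
  have c: "0 \<le> c" "\<forall>s\<in>S. norm (s 0) \<le> c"
    unfolding c_def using S(2) by (auto intro: sum_nonneg member_le_sum)
  have "id \<in> orbit_cball \<Gamma> 0"
    using subgroup.one_closed[OF sg] by (simp add: orbit_cball_def)
  hence N0: "1 \<le> real (card (orbit_cball \<Gamma> 0))"
    using poly[of 0] by (simp add: Suc_le_eq card_gt_0_iff) blast
  have mult: "real (card S) * real (card (orbit_cball \<Gamma> r)) \<le> real (card (orbit_cball \<Gamma> (lam * r + c)))"
    if "0 \<le> r" for r
    using card_orbit_cball_mult_transversal[OF sg A' lam A sub S(1,3) c(2)] poly[of "lam * r + c"]
      that lam c(1) by (simp flip: of_nat_mult)
  have "real (card (orbit_cball \<Gamma> r)) \<le> (K * (r + 1)) ^ DIM((real^'n^'n) \<times> (real^'n))"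
    if "0 \<le> r" for r
    using poly[OF that] by blast
  from polynomial_growth_bounds_multiplier[where N = "\<lambda>r. real (card (orbit_cball \<Gamma> r))",
      OF K this N0 less_imp_le[OF lam] c(1) mult]
  show ?thesis .
qed

theorem mainTheorem13:
  fixes \<Gamma> :: "(real^'n \<Rightarrow> real^'n) set"
    and A' :: "real^'n^'n" and lam :: real and A :: "real^'n \<Rightarrow> real^'n"
  assumes "subgroup \<Gamma> Eucl_group"
    and "discrete_isom_set \<Gamma>"
    and "orthogonal_matrix A'"
    and "lam > 0"
    and "A = (\<lambda>x. lam *\<^sub>R (A' *v x))"
    and "conj_set A \<Gamma> \<subseteq> \<Gamma>"
  shows "subgroup (conj_set A \<Gamma>) (Eucl_group\<lparr>carrier := \<Gamma>\<rparr>)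
         \<and> finite (rcosets\<^bsub>Eucl_group\<lparr>carrier := \<Gamma>\<rparr>\<^esub> (conj_set A \<Gamma>))"
proof
  let ?G = "Eucl_group\<lparr>carrier := \<Gamma>\<rparr>"
  let ?X = "2 * (2 * max 1 lam) ^ DIM((real^'n^'n) \<times> (real^'n))"
  have "bij A"
    using bij_scaled_orthogonal[OF assms(3)] assms(4,5) by simp
  thus "subgroup (conj_set A \<Gamma>) ?G"
    using conj_set_subgroup assms(1,6) by blast
  have "card S \<le> nat \<lceil>?X\<rceil>"
    if "S \<subseteq> \<Gamma>" "finite S" "inj_on (\<lambda>s. conj_set A \<Gamma> #>\<^bsub>?G\<^esub> s) S" for S
    using card_transversal_conj_set_bound[OF assms that] real_nat_ceiling_ge[of ?X] by linarith
  hence "finite ((\<lambda>s. conj_set A \<Gamma> #>\<^bsub>?G\<^esub> s) ` \<Gamma>)"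
    by (rule finite_image_if_card_injective_subsets_bounded)
  thus "finite (rcosets\<^bsub>?G\<^esub> (conj_set A \<Gamma>))"
    by (simp add: RCOSETS_def UNION_singleton_eq_range)
qed

end
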